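(* Let $n\ge 1$, let $A\in\mathbb{R}^{n\times n}$, let $c>0$, and let $Z\in\{0,1\}^{n\times n}$. Consider the problem \[ \text{(P)}\qquad \min_{B,D\in\mathbb{R}^{n\times n}} \|A-B\|_F \quad\text{subject to}\quad \|D\|_2\le c,\quad Z_{ij}D_{ij}=0\ \text{for all } i,j,\quad D=|B|. \] Define $R=|A|$. For $\Lambda\in\mathbb{R}^{n\times n}$ and $M\in\mathbb{R}^{n\times n}$ with $M\ge 0$ (entrywise), let $D(\Lambda,M)=\Pi_c[R+M-\Lambda\odot Z]$ and \[ g(\Lambda,M)=\tfrac12\|D(\Lambda,M)-R\|_F^2+\Lambda\cdot Z\cdot D(\Lambda,M)-M\cdot D(\Lambda,M). \] Then problem (P) is equivalent to the problem $\max_{M\ge 0,\Lambda} g(\Lambda,M)$, where $g(\Lambda,M)=\min_{D:\|D\|_2\le c}\left(\tfrac12\|D-R\|_F^2+\Lambda\cdot Z\cdot D-M\cdot D\right)$ is the Lagrangian dual function (with multipliers $\Lambda$ for the constraints $Z_{ij}D_{ij}=0$ and $M\ge0$ for the constraints $D\ge 0$), and the gradients of $g$ are \[ \frac{dg}{d\Lambda}=Z\odot D(\Lambda,M),\qquad \frac{dg}{dM}=-D(\Lambda,M). \]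
   Context: $\|\cdot\|_F$ is the Frobenius norm and $\|\cdot\|_2$ the spectral norm (largest singular value). $|B|$ denotes the entrywise absolute value, $\odot$ the entrywise (Hadamard) product, and for matrices of equal size $X\cdot Y=\sum_{ij}X_{ij}Y_{ij}$ and the triple dot product $X\cdot Y\cdot W=\sum_{ij}X_{ij}Y_{ij}W_{ij}$. For a matrix $X$ with singular value decomposition $X=USV^T$, $\Pi_c[X]=US'V^T$ with $S'_{ii}=\min(S_{ii},c)$; this is the Frobenius-norm-closest matrix to $X$ among matrices with spectral norm at most $c$. The matrix $Z$ encodes a graph structure: $Z_{ij}=0$ if $(i,j)$ is an edge and $Z_{ij}=1$ otherwise. *)

theory Defs
  imports "HOL-Analysis.Analysis"
begin

type_synonym 'n sqmat = "real^'n^'n"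

definition frob :: "'n::finite sqmat \<Rightarrow> real" where
  "frob X = sqrt (\<Sum>i\<in>UNIV. \<Sum>j\<in>UNIV. (X$i$j)^2)"

definition spec :: "'n::finite sqmat \<Rightarrow> real" where
  "spec X = onorm (\<lambda>x. X *v x)"

definition absm :: "'n::finite sqmat \<Rightarrow> 'n sqmat" where
  "absm X = (\<chi> i j. \<bar>X$i$j\<bar>)"

definition hadamard :: "'n::finite sqmat \<Rightarrow> 'n sqmat \<Rightarrow> 'n sqmat" where
  "hadamard X Y = (\<chi> i j. X$i$j * Y$i$j)"

definition mdot :: "'n::finite sqmat \<Rightarrow> 'n sqmat \<Rightarrow> real" where
  "mdot X Y = (\<Sum>i\<in>UNIV. \<Sum>j\<in>UNIV. X$i$j * Y$i$j)"

definition tdot :: "'n::finite sqmat \<Rightarrow> 'n sqmat \<Rightarrow> 'n sqmat \<Rightarrow> real" where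
  "tdot X Y W = (\<Sum>i\<in>UNIV. \<Sum>j\<in>UNIV. X$i$j * Y$i$j * W$i$j)"

definition nonneg_mat :: "'n::finite sqmat \<Rightarrow> bool" where
  "nonneg_mat X \<longleftrightarrow> (\<forall>i j. X$i$j \<ge> 0)"

definition proj_c :: "real \<Rightarrow> 'n::finite sqmat \<Rightarrow> 'n sqmat" where
  "proj_c c X = (THE Y. \<exists>U S V. orthogonal_matrix U \<and> orthogonal_matrix V \<and>
      (\<forall>i j. i \<noteq> j \<longrightarrow> S$i$j = 0) \<and> (\<forall>i. S$i$i \<ge> 0) \<and>
      X = U ** S ** transpose V \<and>
      Y = U ** (\<chi> i j. if i = j then min (S$i$j) c else 0) ** transpose V)"

definition feasP :: "real \<Rightarrow> 'n::finite sqmat \<Rightarrow> 'n sqmat \<Rightarrow> 'n sqmat \<Rightarrow> bool" where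
  "feasP c Z B D \<longleftrightarrow> spec D \<le> c \<and> (\<forall>i j. Z$i$j * D$i$j = 0) \<and> D = absm B"

definition Dmat :: "real \<Rightarrow> 'n::finite sqmat \<Rightarrow> 'n sqmat \<Rightarrow> 'n sqmat \<Rightarrow> 'n sqmat \<Rightarrow> 'n sqmat" where
  "Dmat c A Z \<Lambda> M = proj_c c (absm A + M - hadamard \<Lambda> Z)"

definition Lag :: "'n::finite sqmat \<Rightarrow> 'n sqmat \<Rightarrow> 'n sqmat \<Rightarrow> 'n sqmat \<Rightarrow> 'n sqmat \<Rightarrow> real" where
  "Lag A Z \<Lambda> M D = (1/2) * (frob (D - absm A))^2 + tdot \<Lambda> Z D - mdot M D"

definition gdual :: "real \<Rightarrow> 'n::finite sqmat \<Rightarrow> 'n sqmat \<Rightarrow> 'n sqmat \<Rightarrow> 'n sqmat \<Rightarrow> real" where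
  "gdual c A Z \<Lambda> M = Lag A Z \<Lambda> M (Dmat c A Z \<Lambda> M)"

end

theory Submission
  imports Defs
begin

text \<open>With R = |A|, problem (P) asks for the Frobenius projection of R onto the intersection of
  the spectral ball \<open>\<parallel>D\<parallel>\<^sub>2 \<le> c\<close> with the cone of nonnegative matrices vanishing where Z = 1; an
  optimal B copies the signs of A onto the projection. Completing the square shows that the
  Lagrangian is minimised over the spectral ball by the projection \<open>\<Pi>\<^sub>c\<close> of R + M - \<Lambda> \<odot> Z, which
  clips singular values (an SVD is obtained by repeatedly maximising \<open>\<parallel>X u\<parallel>\<close> over unit vectors),
  so g is a Moreau envelope composed with an affine map and its gradient is read off from the
  projection. Strong duality holds because the spectral ball contains a neighbourhood of the
  apex 0 of the cone: the normal vector R - D* at the optimum then splits into a normal of the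
  cone, which yields the multipliers, and a normal of the spectral ball.\<close>

section \<open>Projections onto closed convex sets\<close>

lemma closest_point_eqI:
  fixes S :: "'a::{real_inner,heine_borel} set"
  assumes "convex S" "closed S" "x \<in> S" "\<forall>z\<in>S. inner (a - x) (z - x) \<le> 0"
  shows "closest_point S a = x"
proof (rule closest_point_unique[symmetric, OF assms(1-3)], intro ballI)
  fix z assume "z \<in> S"
  have "(dist a z)^2 = (dist a x)^2 + (norm (z - x))^2 - 2 * inner (a - x) (z - x)"
    unfolding dist_norm power2_norm_eq_inner
    by (simp add: inner_commute algebra_simps)
  with assms(4) \<open>z \<in> S\<close> have "(dist a x)^2 \<le> (dist a z)^2"
    by (smt (verit) zero_le_power2)
  then show "dist a x \<le> dist a z" using power2_le_imp_le by force
qed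

lemma has_derivative_of_quadratic_error:
  fixes f :: "'a::real_normed_vector \<Rightarrow> real"
  assumes "bounded_linear f'" and "\<And>y. \<bar>f y - f x - f' (y - x)\<bar> \<le> C * (norm (y - x))^2"
  shows "(f has_derivative f') (at x)"
  unfolding has_derivative_at_alt
proof (intro conjI assms(1) allI impI)
  fix e :: real assume "e > 0"
  define d where "d = e / (\<bar>C\<bar> + 1)"
  have "d > 0" and "\<bar>C\<bar> * d \<le> e"
    using \<open>e > 0\<close> by (simp_all add: d_def field_simps add_pos_nonneg)
  show "\<exists>d>0. \<forall>y. norm (y - x) < d \<longrightarrow> norm (f y - f x - f' (y - x)) \<le> e * norm (y - x)"
  proof (intro exI[of _ d] conjI allI impI \<open>d > 0\<close>)
    fix y assume y: "norm (y - x) < d"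
    have "norm (f y - f x - f' (y - x)) \<le> \<bar>C\<bar> * norm (y - x) * norm (y - x)"
      using assms(2)[of y] mult_right_mono[OF abs_ge_self[of C], of "(norm (y - x))^2"]
      by (simp add: power2_eq_square mult.assoc)
    also have "\<dots> \<le> e * norm (y - x)"
      using y \<open>\<bar>C\<bar> * d \<le> e\<close> mult_left_mono[of "norm (y - x)" d "\<bar>C\<bar>"]
      by (intro mult_right_mono) auto
    finally show "norm (f y - f x - f' (y - x)) \<le> e * norm (y - x)" .
  qed
qed

text \<open>The first-order remainder is squeezed between the minimality of the projections at a and
  at b, with the Lipschitz bound on the projection controlling the cross term.\<close>
lemma closest_point_envelope_has_derivative:
  fixes S :: "'a::euclidean_space set"
  assumes "convex S" "closed S" "S \<noteq> {}"
  shows "((\<lambda>y. (1/2) * (norm (y - closest_point S y))^2 - (1/2) * (norm y)^2)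
           has_derivative (\<lambda>d. inner (- closest_point S a) d)) (at a)"
proof (rule has_derivative_of_quadratic_error[where C = 1])
  show "bounded_linear (\<lambda>d. inner (- closest_point S a) d)" by (rule bounded_linear_inner_right)
  fix b
  define p q d where "p = closest_point S a" and "q = closest_point S b" and "d = b - a"
  have "dist b q \<le> dist b p" "dist a p \<le> dist a q"
    unfolding p_def q_def using assms by (simp_all add: closest_point_le closest_point_in_set)
  then have hb: "(norm (q - b))^2 \<le> (norm (p - b))^2" and ha: "(norm (p - a))^2 \<le> (norm (q - a))^2"
    by (simp_all add: dist_norm norm_minus_commute power_mono)
  have "norm (q - p) \<le> norm d"
    using closest_point_lipschitz[OF assms, of b a] by (simp add: p_def q_def d_def dist_norm)
  then have "\<bar>inner (q - p) d\<bar> \<le> (norm d)^2"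
    using Cauchy_Schwarz_ineq2[of "q - p" d] by (simp add: power2_eq_square)
      (smt (verit) mult_right_mono norm_ge_zero)
  moreover have "b = a + d" by (simp add: d_def)
  ultimately show "\<bar>(1/2) * (norm (b - q))^2 - (1/2) * (norm b)^2
      - ((1/2) * (norm (a - p))^2 - (1/2) * (norm a)^2) - inner (- p) (b - a)\<bar> \<le> 1 * (norm (b - a))^2"
    using ha hb unfolding d_def[symmetric] power2_norm_eq_inner
    by (simp add: inner_commute algebra_simps abs_le_iff)
qed

text \<open>Separate the hypograph of \<open>y \<mapsto> v \<bullet> (y - x)\<close> over K from L \<times> (0, \<infinity>).\<close>
lemma normal_Int_separation:
  fixes K L :: "'a::euclidean_space set"
  assumes "convex K" "convex L" "x \<in> K" "x \<in> L"
    and normal: "\<forall>y \<in> K \<inter> L. inner v (y - x) \<le> 0"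
  obtains w \<beta> where "(w, \<beta>) \<noteq> 0" "\<beta> \<ge> 0"
    "\<And>y. y \<in> K \<Longrightarrow> inner w y + \<beta> * inner v (y - x) \<le> inner w x"
    "\<And>y. y \<in> L \<Longrightarrow> inner w x \<le> inner w y"
proof -
  define S1 where "S1 = {p. fst p \<in> K \<and> snd p \<le> inner v (fst p - x)}"
  have "S1 = (K \<times> UNIV) \<inter> {p. inner (- v, 1::real) p \<le> - inner v x}"
    by (auto simp: S1_def inner_diff_right)
  then have "convex S1"
    using assms(1) by (simp add: convex_Int convex_Times convex_halfspace_le)
  moreover have "convex (L \<times> {(0::real)<..})"
    using assms(2) by (simp add: convex_Times)
  moreover have "S1 \<inter> (L \<times> {(0::real)<..}) = {}"
    using normal by (force simp: S1_def)
  moreover have "S1 \<noteq> {}" "L \<times> {(0::real)<..} \<noteq> {}"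
    using assms(3,4) by (auto simp: S1_def intro!: exI[of _ "(x, 0)"])
  ultimately obtain a b where sep: "a \<noteq> 0" "\<forall>p\<in>S1. inner a p \<le> b"
      "\<forall>p\<in>L \<times> {(0::real)<..}. inner a p \<ge> b"
    using separating_hyperplane_sets by metis
  obtain w \<beta> where a: "a = (w, \<beta>)" by fastforce
  have F1: "inner w y + \<beta> * \<alpha> \<le> b" if "y \<in> K" "\<alpha> \<le> inner v (y - x)" for y \<alpha>
    using sep(2) that by (auto simp: S1_def a)
  have F2: "b \<le> inner w y + \<beta> * \<alpha>" if "y \<in> L" "0 < \<alpha>" for y \<alpha>
    using sep(3) that by (auto simp: a)
  have "\<beta> \<ge> 0" using F1[OF \<open>x \<in> K\<close>, of "-1"] F2[OF \<open>x \<in> L\<close>, of 1] by simp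
  have F2': "b \<le> inner w y" if "y \<in> L" for y
  proof (rule field_le_epsilon)
    fix e :: real assume "e > 0"
    then have "\<beta> * (e / (\<beta> + 1)) \<le> e"
      using \<open>\<beta> \<ge> 0\<close> by (simp add: field_simps)
    moreover have "b \<le> inner w y + \<beta> * (e / (\<beta> + 1))"
      using F2[OF that, of "e / (\<beta> + 1)"] \<open>e > 0\<close> \<open>\<beta> \<ge> 0\<close> by simp
    ultimately show "b \<le> inner w y + e" by linarith
  qed
  have "b = inner w x" using F1[OF \<open>x \<in> K\<close>, of 0] F2'[OF \<open>x \<in> L\<close>] by simp
  with sep(1) \<open>\<beta> \<ge> 0\<close> F1[OF _ order_refl] F2' show ?thesis
    by (intro that[of w \<beta>]) (auto simp: a)
qed

text \<open>The ball around 0 \<in> L inside K forces the separating functional of the previous lemma to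
  have a positive last coordinate; rescaled, its first coordinate is the normal n.\<close>
lemma normal_cone_Int:
  fixes K L :: "'a::euclidean_space set"
  assumes "convex K" "convex L" "r > 0" "cball 0 r \<subseteq> K" "0 \<in> L" "x \<in> K" "x \<in> L"
    and "\<forall>y \<in> K \<inter> L. inner v (y - x) \<le> 0"
  obtains n where "\<forall>y \<in> L. inner n (y - x) \<le> 0" "\<forall>y \<in> K. inner (v - n) (y - x) \<le> 0"
proof -
  obtain w \<beta> where sep: "(w, \<beta>) \<noteq> 0" "\<beta> \<ge> 0"
      and F1: "\<And>y. y \<in> K \<Longrightarrow> inner w y + \<beta> * inner v (y - x) \<le> inner w x"
      and F2: "\<And>y. y \<in> L \<Longrightarrow> inner w x \<le> inner w y"
    using normal_Int_separation[OF assms(1,2,6,7,8)] by blast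
  have "\<beta> > 0"
  proof (rule ccontr)
    assume "\<not> \<beta> > 0"
    with sep have "\<beta> = 0" "w \<noteq> 0" by (auto simp: zero_prod_def)
    have "0 \<in> K" using assms(3,4) by auto
    then have "inner w x = 0"
      using F1[of 0] F2[OF \<open>0 \<in> L\<close>] \<open>\<beta> = 0\<close> by simp
    moreover have "(r / norm w) *\<^sub>R w \<in> K"
      using assms(3,4) \<open>w \<noteq> 0\<close> by (auto simp: subset_iff)
    ultimately have "r * norm w \<le> 0"
      using F1 \<open>\<beta> = 0\<close> \<open>w \<noteq> 0\<close> by (fastforce simp: power2_norm_eq_inner[symmetric] power2_eq_square)
    with \<open>r > 0\<close> \<open>w \<noteq> 0\<close> show False by (simp add: mult_le_0_iff)
  qed
  show ?thesis
  proof (rule that[of "- (1 / \<beta>) *\<^sub>R w"]; intro ballI)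
    fix y
    show "inner (- (1 / \<beta>) *\<^sub>R w) (y - x) \<le> 0" if "y \<in> L"
      using F2[OF that] \<open>\<beta> > 0\<close> by (simp add: inner_diff_right divide_right_mono)
    show "inner (v - - (1 / \<beta>) *\<^sub>R w) (y - x) \<le> 0" if "y \<in> K"
    proof -
      have "inner (v - - (1 / \<beta>) *\<^sub>R w) (y - x) = (\<beta> * inner v (y - x) + inner w y - inner w x) / \<beta>"
        using \<open>\<beta> > 0\<close> by (simp add: inner_diff_right inner_add_left field_simps)
      with F1[OF that] \<open>\<beta> > 0\<close> show ?thesis by (simp add: divide_nonpos_pos)
    qed
  qed
qed

section \<open>The spectral ball\<close>

definition spectral_ball :: "real \<Rightarrow> 'n::finite sqmat set" where
  "spectral_ball c = {D. spec D \<le> c}"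

lemma spec_le_iff: "spec D \<le> c \<longleftrightarrow> (\<forall>x. norm (D *v x) \<le> c * norm x)"
proof
  assume "spec D \<le> c"
  then show "\<forall>x. norm (D *v x) \<le> c * norm x"
    using onorm[OF matrix_vector_mul_bounded_linear[of D]] unfolding spec_def
    by (meson mult_right_mono norm_ge_zero order_trans)
qed (auto simp: spec_def intro: onorm_le)

lemma bounded_linear_matrix_vector_mult_left:
  "bounded_linear (\<lambda>D::real^'n::finite^'m::finite. D *v x)"
proof -
  have "linear (\<lambda>D::real^'n^'m. D *v x)"
    by (rule linearI) (simp_all add: matrix_vector_mult_def vec_eq_iff sum.distrib sum_distrib_left algebra_simps)
  then show ?thesis by (simp add: linear_conv_bounded_linear)
qed

lemma spectral_ball_eq_INT: "spectral_ball c = (\<Inter>x. (\<lambda>D. D *v x) -` cball 0 (c * norm x))"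
  by (auto simp: spectral_ball_def spec_le_iff)

lemma closed_spectral_ball: "closed (spectral_ball c)"
  unfolding spectral_ball_eq_INT
  by (intro closed_INT ballI continuous_closed_vimage closed_cball linear_continuous_at
      bounded_linear_matrix_vector_mult_left)

lemma convex_spectral_ball: "convex (spectral_ball c)"
  unfolding spectral_ball_eq_INT
  by (intro convex_INT ballI convex_linear_vimage convex_cball
      bounded_linear.linear[OF bounded_linear_matrix_vector_mult_left])

lemma cball_subset_spectral_ball:
  "cball 0 (c / (real CARD('n) * real CARD('n))) \<subseteq> (spectral_ball c :: 'n::finite sqmat set)"
proof
  fix D :: "'n sqmat" assume "D \<in> cball 0 (c / (real CARD('n) * real CARD('n)))"
  then have "\<bar>D$i$j\<bar> \<le> c / (real CARD('n) * real CARD('n))" for i j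
    using component_le_norm_cart[of "D$i" j] Finite_Cartesian_Product.norm_nth_le[of D i] by simp
  then have "onorm ((*v) D) \<le> real CARD('n) * real CARD('n) * (c / (real CARD('n) * real CARD('n)))"
    by (rule onorm_le_matrix_component)
  then show "D \<in> spectral_ball c" by (simp add: spectral_ball_def spec_def)
qed

lemma zero_in_spectral_ball: "c \<ge> 0 \<Longrightarrow> 0 \<in> spectral_ball c"
  by (simp add: spectral_ball_def spec_le_iff)

section \<open>Singular value decomposition\<close>

lemma le_quadratic_imp_zero:
  fixes a K :: real
  assumes "\<And>t. 2 * t * a \<le> t^2 * K"
  shows "a = 0"
proof (rule ccontr)
  assume "a \<noteq> 0"
  define d where "d = \<bar>K\<bar> + 1"
  have "d > 0" by (simp add: d_def add_pos_nonneg)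
  have "2 * (a / d) * a * d^2 \<le> (a / d)^2 * K * d^2"
    using assms[of "a / d"] by (rule mult_right_mono) simp
  with \<open>d > 0\<close> have "2 * a^2 * d \<le> a^2 * K"
    by (simp add: power2_eq_square field_simps)
  moreover have "a^2 * K < a^2 * (2 * d)"
    using \<open>a \<noteq> 0\<close> by (intro mult_strict_left_mono) (auto simp: d_def)
  ultimately show False by simp
qed

text \<open>Otherwise perturbing u in the direction y would increase the stretch to first order.\<close>
lemma norm_image_maximizer_orthogonal:
  fixes f :: "'a::real_inner \<Rightarrow> 'b::real_inner"
  assumes "linear f" "subspace W" "u \<in> W" "norm u = 1"
    and max: "\<And>x. x \<in> W \<Longrightarrow> norm (f x) \<le> norm (f u) * norm x"
    and "y \<in> W" "inner u y = 0"
  shows "inner (f u) (f y) = 0"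
proof (rule le_quadratic_imp_zero)
  fix t :: real
  have "u + t *\<^sub>R y \<in> W" using assms(2,3,6) by (simp add: subspace_add subspace_scale)
  then have "(norm (f (u + t *\<^sub>R y)))^2 \<le> (norm (f u))^2 * (norm (u + t *\<^sub>R y))^2"
    using max by (metis norm_ge_zero power_mono power_mult_distrib)
  moreover have "f (u + t *\<^sub>R y) = f u + t *\<^sub>R f y"
    using assms(1) by (simp add: linear_add linear_scale)
  moreover have "(norm (u + t *\<^sub>R y))^2 = 1 + t^2 * (norm y)^2"
    using assms(4,7) unfolding power2_norm_eq_inner
    by (simp add: inner_add_left inner_add_right inner_commute norm_eq_1 power2_eq_square)
  ultimately show "2 * t * inner (f u) (f y) \<le> t^2 * ((norm (f u))^2 * (norm y)^2 - (norm (f y))^2)"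
    using assms(4,7) unfolding power2_norm_eq_inner
    by (simp add: inner_commute norm_eq_1 algebra_simps power2_eq_square)
qed

lemma exists_norm_image_maximizer:
  fixes f :: "'a::euclidean_space \<Rightarrow> 'b::real_normed_vector"
  assumes "linear f" "subspace W" "W \<noteq> {0}"
  obtains u where "u \<in> W" "norm u = 1" "\<And>x. x \<in> W \<Longrightarrow> norm (f x) \<le> norm (f u) * norm x"
proof -
  let ?S = "sphere 0 1 \<inter> W"
  obtain w where "w \<in> W" "w \<noteq> 0" using assms(2,3) subspace_0 by blast
  then have "w /\<^sub>R norm w \<in> ?S" using assms(2) by (simp add: subspace_scale)
  moreover have "compact ?S"
    using assms(2) by (intro compact_Int_closed compact_sphere closed_subspace)
  moreover have "continuous_on ?S (\<lambda>x. norm (f x))"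
    using assms(1) by (intro continuous_on_norm linear_continuous_on linear_conv_bounded_linear[THEN iffD1])
  ultimately obtain u where u: "u \<in> ?S" "\<And>y. y \<in> ?S \<Longrightarrow> norm (f y) \<le> norm (f u)"
    using continuous_attains_sup[of ?S "\<lambda>x. norm (f x)"] by blast
  show ?thesis
  proof (rule that)
    show "u \<in> W" "norm u = 1" using u(1) by auto
    show "norm (f x) \<le> norm (f u) * norm x" if "x \<in> W" for x
    proof (cases "x = 0")
      case False
      then have "norm (f (x /\<^sub>R norm x)) \<le> norm (f u)"
        using that assms(2) by (intro u(2)) (simp add: subspace_scale)
      with False show ?thesis
        using assms(1) by (simp add: linear_scale field_simps)
    qed (use assms(1) linear_0 in simp)
  qed
qed

lemma span_insert_orthogonal_complement:
  fixes u :: "'a::euclidean_space"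
  assumes "subspace W" "u \<in> W" "norm u = 1" "span B = W \<inter> {x. inner u x = 0}"
  shows "span (insert u B) = W"
proof
  have "B \<subseteq> W" using assms(4) span_superset by blast
  then show "span (insert u B) \<subseteq> W"
    using assms(1,2) by (simp add: span_minimal)
  show "W \<subseteq> span (insert u B)"
  proof
    fix x assume "x \<in> W"
    then have "x - inner u x *\<^sub>R u \<in> span B"
      using assms by (simp add: subspace_diff subspace_scale inner_diff_right norm_eq_1)
    then have "x - inner u x *\<^sub>R u \<in> span (insert u B)"
      using span_mono[of B "insert u B"] by blast
    moreover have "inner u x *\<^sub>R u \<in> span (insert u B)"
      by (intro span_mul span_base) simp
    ultimately have "x - inner u x *\<^sub>R u + inner u x *\<^sub>R u \<in> span (insert u B)"
      by (rule span_add)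
    then show "x \<in> span (insert u B)" by simp
  qed
qed

lemma orthonormal_basis_orthogonal_images:
  fixes f :: "'a::euclidean_space \<Rightarrow> 'b::real_inner"
  assumes "linear f" "subspace W"
  obtains B where "B \<subseteq> W" "span B = W" "\<And>x. x \<in> B \<Longrightarrow> norm x = 1" "pairwise orthogonal B"
    "\<And>a b. a \<in> B \<Longrightarrow> b \<in> B \<Longrightarrow> a \<noteq> b \<Longrightarrow> inner (f a) (f b) = 0"
  using assms(2)
proof (induction "dim W" arbitrary: W thesis rule: less_induct)
  case less
  show ?case
  proof (cases "W = {0}")
    case True
    then show ?thesis by (intro less.prems(1)[of "{}"]) auto
  next
    case False
    obtain u where u: "u \<in> W" "norm u = 1" "\<And>x. x \<in> W \<Longrightarrow> norm (f x) \<le> norm (f u) * norm x"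
      using exists_norm_image_maximizer[OF assms(1) less.prems(2) False] by blast
    define W' where "W' = W \<inter> {x. inner u x = 0}"
    have "subspace W'" unfolding W'_def
      by (intro subspace_inter less.prems(2) subspace_hyperplane)
    have "u \<notin> W'" using u(2) by (auto simp: W'_def norm_eq_1)
    with u(1) have "W' \<subset> W" unfolding W'_def by blast
    then have "span W' \<subset> span W"
      using \<open>subspace W'\<close> less.prems(2) by (simp add: span_eq_iff[THEN iffD2])
    then have "dim W' < dim W" by (rule dim_psubset)
    then obtain B where B: "B \<subseteq> W'" "span B = W'" "\<And>x. x \<in> B \<Longrightarrow> norm x = 1"
        "pairwise orthogonal B" "\<And>a b. a \<in> B \<Longrightarrow> b \<in> B \<Longrightarrow> a \<noteq> b \<Longrightarrow> inner (f a) (f b) = 0"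
      using less.hyps[OF _ _ \<open>subspace W'\<close>] by blast
    have "insert u B \<subseteq> W" using u(1) B(1) by (auto simp: W'_def)
    moreover have "span (insert u B) = W"
      using span_insert_orthogonal_complement[OF less.prems(2) u(1,2)] B(2) by (simp add: W'_def)
    moreover have "inner (f u) (f b) = 0" if "b \<in> B" for b
      using norm_image_maximizer_orthogonal[OF assms(1) less.prems(2) u] B(1) that by (auto simp: W'_def)
    ultimately show ?thesis
      using u(2) B(1,3-5)
      by (intro less.prems(1)[of "insert u B"])
        (auto simp: W'_def inner_commute orthogonal_def pairwise_insert)
  qed
qed

lemma orthonormal_extend_basis:
  fixes S :: "'a::euclidean_space set"
  assumes "pairwise orthogonal S" "\<And>x. x \<in> S \<Longrightarrow> norm x = 1"
  obtains T where "S \<subseteq> T" "pairwise orthogonal T" "\<And>x. x \<in> T \<Longrightarrow> norm x = 1"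
    "finite T" "card T = DIM('a)"
proof -
  obtain U where U: "U \<inter> insert 0 S = {}" "pairwise orthogonal (S \<union> U)"
      "span (S \<union> U) = span (S \<union> UNIV)"
    using orthogonal_extension_strong[OF assms(1)] by blast
  define T where "T = (\<lambda>x. x /\<^sub>R norm x) ` (S \<union> U)"
  have "S \<subseteq> T" using assms(2) by (force simp: T_def)
  have norm_T: "norm x = 1" if "x \<in> T" for x
    using that assms(2) U(1) by (auto simp: T_def) (metis left_inverse norm_eq_zero)
  have "pairwise orthogonal T"
    using U(2) unfolding T_def pairwise_image by (rule pairwise_mono) (auto simp: orthogonal_clauses)
  then have "independent T"
    using norm_T pairwise_orthogonal_independent by fastforce
  have "S \<union> U \<subseteq> span T"
  proof
    fix x assume "x \<in> S \<union> U"
    then consider "x \<in> S" | "x \<in> U" "x \<noteq> 0" using U(1) by blast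
    then show "x \<in> span T"
    proof cases
      case 2
      then have "norm x *\<^sub>R (x /\<^sub>R norm x) \<in> span T"
        by (intro span_mul span_base) (simp add: T_def)
      with 2 show ?thesis by simp
    qed (use \<open>S \<subseteq> T\<close> span_base in blast)
  qed
  then have "span T = UNIV"
    using U(3) span_minimal[of "S \<union> U" "span T"] by auto
  then have "card T = DIM('a)"
    using dim_span_eq_card_independent[OF \<open>independent T\<close>] by simp
  then show ?thesis
    using that \<open>S \<subseteq> T\<close> \<open>pairwise orthogonal T\<close> norm_T \<open>independent T\<close> independent_imp_finite by blast
qed

lemma orthogonal_matrix_extend_columns:
  fixes g :: "'n::finite \<Rightarrow> real^'n"
  assumes norm_g: "\<And>i. i \<in> F \<Longrightarrow> norm (g i) = 1"
    and orth_g: "\<And>i j. i \<in> F \<Longrightarrow> j \<in> F \<Longrightarrow> i \<noteq> j \<Longrightarrow> orthogonal (g i) (g j)"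
  shows "\<exists>U. orthogonal_matrix U \<and> (\<forall>i\<in>F. column i U = g i)"
proof -
  have "inj_on g F"
    using norm_g orth_g by (metis inj_onI orthogonal_self norm_zero zero_neq_one)
  have "pairwise orthogonal (g ` F)"
    using orth_g by (auto simp: pairwise_def)
  then obtain T where T: "g ` F \<subseteq> T" "pairwise orthogonal T" "\<And>x. x \<in> T \<Longrightarrow> norm x = 1"
      "finite T" "card T = DIM(real^'n)"
    using orthonormal_extend_basis norm_g by blast
  have "card (T - g ` F) = card (UNIV - F)"
    using T(1,4,5) \<open>inj_on g F\<close> by (simp add: card_Diff_subset card_image finite_subset)
  then obtain \<beta> where \<beta>: "bij_betw \<beta> (UNIV - F) (T - g ` F)"
    using finite_same_card_bij[of "UNIV - F" "T - g ` F"] T(4) by auto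
  define u where "u i = (if i \<in> F then g i else \<beta> i)" for i
  have "u i \<in> T" for i
    using T(1) bij_betwE[OF \<beta>] by (auto simp: u_def)
  have "u i \<noteq> u j" if "i \<noteq> j" for i j
  proof (cases "i \<in> F"; cases "j \<in> F")
    assume "i \<in> F" "j \<in> F"
    then show ?thesis using \<open>inj_on g F\<close> that by (auto simp: u_def inj_on_def)
  next
    assume "i \<in> F" "j \<notin> F"
    then show ?thesis using bij_betwE[OF \<beta>] by (auto simp: u_def) (metis DiffI UNIV_I imageI)
  next
    assume "i \<notin> F" "j \<in> F"
    then show ?thesis using bij_betwE[OF \<beta>] by (auto simp: u_def)
  next
    assume "i \<notin> F" "j \<notin> F"
    then show ?thesis using bij_betw_imp_inj_on[OF \<beta>] that by (auto simp: u_def inj_on_def)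
  qed
  then have "orthogonal (u i) (u j)" if "i \<noteq> j" for i j
    using T(2) \<open>\<And>i. u i \<in> T\<close> that unfolding pairwise_def by blast
  moreover have "norm (u i) = 1" for i
    using T(3) \<open>u i \<in> T\<close> by blast
  moreover have "column i (\<chi> a i. u i $ a) = u i" for i
    by (simp add: column_def vec_eq_iff)
  ultimately show ?thesis
    by (intro exI[of _ "\<chi> a i. u i $ a"]) (simp add: orthogonal_matrix_orthonormal_columns u_def)
qed

lemma orthogonal_matrix_orthogonal_images:
  fixes X :: "real^'n::finite^'m::finite"
  obtains V where "orthogonal_matrix V"
    "\<And>i j. i \<noteq> j \<Longrightarrow> inner (X *v column i V) (X *v column j V) = 0"
proof -
  obtain B where B: "span B = UNIV" "\<And>x. x \<in> B \<Longrightarrow> norm x = 1" "pairwise orthogonal B"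
      "\<And>a b. a \<in> B \<Longrightarrow> b \<in> B \<Longrightarrow> a \<noteq> b \<Longrightarrow> inner (X *v a) (X *v b) = 0"
    using orthonormal_basis_orthogonal_images[OF matrix_vector_mul_linear subspace_UNIV] by metis
  then have "independent B"
    using pairwise_orthogonal_independent by fastforce
  then have "finite B" "card B = CARD('n)"
    using dim_span_eq_card_independent[of B] B(1) independent_imp_finite by auto
  then obtain e where e: "bij_betw e (UNIV :: 'n set) B"
    using finite_same_card_bij[of "UNIV :: 'n set" B] by auto
  then have eB: "e i \<in> B" and e_inj: "i \<noteq> j \<Longrightarrow> e i \<noteq> e j" for i j
    by (auto simp: bij_betw_def inj_def)
  have "orthogonal (e i) (e j)" if "i \<in> UNIV" "j \<in> UNIV" "i \<noteq> j" for i j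
    using B(3) eB e_inj[OF \<open>i \<noteq> j\<close>] unfolding pairwise_def by blast
  then obtain V where V: "orthogonal_matrix V" "\<forall>i\<in>UNIV. column i V = e i"
    using orthogonal_matrix_extend_columns[of UNIV e, OF B(2)[OF eB]] by blast
  show ?thesis
  proof (rule that[OF V(1)])
    fix i j :: 'n assume "i \<noteq> j"
    then show "inner (X *v column i V) (X *v column j V) = 0"
      using V(2) B(4)[OF eB eB e_inj] by simp
  qed
qed

lemma svd_exists:
  fixes X :: "real^'n::finite^'n"
  shows "\<exists>U S V. orthogonal_matrix U \<and> orthogonal_matrix V \<and>
      (\<forall>i j. i \<noteq> j \<longrightarrow> S$i$j = 0) \<and> (\<forall>i. S$i$i \<ge> 0) \<and> X = U ** S ** transpose V"
proof -
  obtain V where V: "orthogonal_matrix V"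
      "\<And>i j. i \<noteq> j \<Longrightarrow> inner (X *v column i V) (X *v column j V) = 0"
    using orthogonal_matrix_orthogonal_images by blast
  define \<sigma> where "\<sigma> i = norm (X *v column i V)" for i
  define u where "u i = (1 / \<sigma> i) *\<^sub>R (X *v column i V)" for i
  have norm_u: "norm (u i) = 1" if "i \<in> {i. \<sigma> i \<noteq> 0}" for i
    using that by (simp add: u_def \<sigma>_def)
  have orth_u: "orthogonal (u i) (u j)" if "i \<in> {i. \<sigma> i \<noteq> 0}" "j \<in> {i. \<sigma> i \<noteq> 0}" "i \<noteq> j" for i j
    using V(2)[OF \<open>i \<noteq> j\<close>] by (simp add: u_def orthogonal_def)
  obtain U where U: "orthogonal_matrix U" "\<forall>i\<in>{i. \<sigma> i \<noteq> 0}. column i U = u i"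
    using orthogonal_matrix_extend_columns[of "{i. \<sigma> i \<noteq> 0}" u, OF norm_u orth_u] by blast
  define S :: "real^'n^'n" where "S = (\<chi> i j. if i = j then \<sigma> i else 0)"
  have "X *v column i V = \<sigma> i *\<^sub>R column i U" for i
    using U(2) by (cases "\<sigma> i = 0") (simp_all add: u_def \<sigma>_def)
  have "(X ** V)$a$i = (U ** S)$a$i" for a i
  proof -
    have "(X ** V)$a$i = (X *v column i V)$a"
      by (simp add: matrix_matrix_mult_def matrix_vector_mult_def column_def)
    also have "\<dots> = (\<sigma> i *\<^sub>R column i U)$a"
      by (simp only: \<open>\<And>i. X *v column i V = \<sigma> i *\<^sub>R column i U\<close>)
    also have "\<dots> = U$a$i * \<sigma> i"
      by (simp add: column_def)
    also have "\<dots> = (U ** S)$a$i"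
      by (simp add: matrix_matrix_mult_def S_def if_distrib[of "(*) _"] cong: if_cong)
    finally show ?thesis .
  qed
  then have "X ** V = U ** S" by (simp add: vec_eq_iff)
  then have "X = U ** S ** transpose V"
    using V(1) unfolding orthogonal_matrix_def by (metis matrix_mul_assoc matrix_mul_rid)
  moreover have "\<forall>i j. i \<noteq> j \<longrightarrow> S$i$j = 0" "\<forall>i. S$i$i \<ge> 0" by (simp_all add: S_def \<sigma>_def)
  ultimately show ?thesis using U(1) V(1) by blast
qed

section \<open>Projection onto the spectral ball\<close>

lemma matrix_diff_ldistrib: "(A::'a::ring_1^'n::finite^'m) ** (B - C) = A ** B - A ** C"
  by (simp add: matrix_matrix_mult_def vec_eq_iff sum_subtractf algebra_simps)

lemma matrix_diff_rdistrib: "((A::'a::ring_1^'n::finite^'m) - B) ** C = A ** C - B ** C"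
  by (simp add: matrix_matrix_mult_def vec_eq_iff sum_subtractf algebra_simps)

lemma norm_orthogonal_matrix_vector_mult:
  fixes U :: "real^'n::finite^'n"
  assumes "orthogonal_matrix U"
  shows "norm (U *v x) = norm x"
proof -
  have "orthogonal_transformation ((*v) U)"
    using assms by (simp add: orthogonal_transformation_matrix matrix_of_matrix_vector_mul)
  then show ?thesis by (rule orthogonal_transformation_norm)
qed

lemma norm_diagonal_matrix_vector_mult_le:
  fixes D :: "real^'n::finite^'n"
  assumes "\<And>i j. i \<noteq> j \<Longrightarrow> D$i$j = 0" "\<And>i. \<bar>D$i$i\<bar> \<le> c"
  shows "norm (D *v w) \<le> c * norm w"
proof -
  have "c \<ge> 0" using assms(2) abs_ge_zero order_trans by blast
  have "(D *v w) $ i = D$i$i * w$i" for i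
    unfolding matrix_vector_mult_def
    by (simp, rule sum.mono_neutral_cong_right[where S="{i}", simplified]) (use assms(1) in auto)
  then have "(norm (D *v w))^2 = (\<Sum>i\<in>UNIV. (D$i$i)^2 * (w$i)^2)"
    unfolding power2_norm_eq_inner by (simp add: inner_vec_def power2_eq_square algebra_simps)
  also have "\<dots> \<le> (\<Sum>i\<in>UNIV. c^2 * (w$i)^2)"
    using assms(2) by (intro sum_mono mult_right_mono) (auto simp: abs_le_square_iff[symmetric] abs_of_nonneg \<open>c \<ge> 0\<close>)
  also have "\<dots> = (c * norm w)^2"
    unfolding power_mult_distrib power2_norm_eq_inner by (simp add: inner_vec_def sum_distrib_left power2_eq_square)
  finally show ?thesis
    using \<open>c \<ge> 0\<close> power2_le_imp_le by simp
qed

lemma inner_column_matrix_vector: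
  fixes U W V :: "real^'n::finite^'n"
  shows "inner (column i U) (W *v column j V) = (transpose U ** W ** V)$i$j"
  by (simp add: inner_vec_def column_def matrix_vector_mult_def matrix_matrix_mult_def
      transpose_def sum_distrib_left sum_distrib_right algebra_simps) (rule sum.swap)

lemma inner_diagonal_conj:
  fixes U E V W :: "real^'n::finite^'n"
  assumes "\<And>i j. i \<noteq> j \<Longrightarrow> E$i$j = 0"
  shows "inner (U ** E ** transpose V) W = (\<Sum>i\<in>UNIV. E$i$i * (transpose U ** W ** V)$i$i)"
proof -
  have "(\<Sum>l\<in>UNIV. U$a$l * E$l$k) = U$a$k * E$k$k" for a k
    by (rule sum.mono_neutral_cong_right[where S="{k}", simplified]) (use assms in auto)
  then have "U ** E = (\<chi> a k. U$a$k * E$k$k)"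
    by (simp add: matrix_matrix_mult_def vec_eq_iff)
  define f where "f a b k = U$a$k * E$k$k * V$b$k * W$a$b" for a b k
  have "inner (U ** E ** transpose V) W = (\<Sum>a\<in>UNIV. \<Sum>b\<in>UNIV. \<Sum>k\<in>UNIV. f a b k)"
    unfolding \<open>U ** E = _\<close>
    by (simp add: inner_vec_def matrix_matrix_mult_def transpose_def f_def sum_distrib_right)
  also have "\<dots> = (\<Sum>a\<in>UNIV. \<Sum>k\<in>UNIV. \<Sum>b\<in>UNIV. f a b k)"
    by (rule sum.cong[OF refl], rule sum.swap)
  also have "\<dots> = (\<Sum>k\<in>UNIV. \<Sum>a\<in>UNIV. \<Sum>b\<in>UNIV. f a b k)"
    by (rule sum.swap)
  also have "\<dots> = (\<Sum>k\<in>UNIV. \<Sum>b\<in>UNIV. \<Sum>a\<in>UNIV. f a b k)"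
    by (rule sum.cong[OF refl], rule sum.swap)
  also have "\<dots> = (\<Sum>i\<in>UNIV. E$i$i * (transpose U ** W ** V)$i$i)"
    by (simp add: matrix_matrix_mult_def transpose_def f_def sum_distrib_left sum_distrib_right algebra_simps)
  finally show ?thesis .
qed

lemma orthogonal_conj_diagonal_le:
  fixes U V D :: "real^'n::finite^'n"
  assumes "orthogonal_matrix U" "orthogonal_matrix V" "D \<in> spectral_ball c"
  shows "(transpose U ** D ** V)$i$i \<le> c"
proof -
  have "norm (column i U) = 1" "norm (column i V) = 1"
    using assms(1,2) by (simp_all add: orthogonal_matrix_orthonormal_columns)
  moreover have "norm (D *v column i V) \<le> c * norm (column i V)"
    using assms(3) by (simp add: spectral_ball_def spec_le_iff)
  ultimately have "norm (column i U) * norm (D *v column i V) \<le> c" by simp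
  moreover have "(transpose U ** D ** V)$i$i \<le> norm (column i U) * norm (D *v column i V)"
    unfolding inner_column_matrix_vector[symmetric] by (rule norm_cauchy_schwarz)
  ultimately show ?thesis by linarith
qed

text \<open>The residual is \<open>U E V\<^sup>T\<close> with E diagonal, nonnegative and supported where the clipped
  value is c, while every D in the ball has diagonal entries of \<open>U\<^sup>T D V\<close> at most c; this gives
  the variational inequality.\<close>
lemma closest_point_spectral_ball_svd:
  fixes U S V :: "real^'n::finite^'n"
  assumes "c \<ge> 0" "orthogonal_matrix U" "orthogonal_matrix V"
    and diag: "\<forall>i j. i \<noteq> j \<longrightarrow> S$i$j = 0" and "\<forall>i. S$i$i \<ge> 0"
  shows "closest_point (spectral_ball c) (U ** S ** transpose V)
       = U ** (\<chi> i j. if i = j then min (S$i$j) c else 0) ** transpose V"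
proof (rule closest_point_eqI[OF convex_spectral_ball closed_spectral_ball])
  define S' :: "real^'n^'n" where "S' = (\<chi> i j. if i = j then min (S$i$j) c else 0)"
  define E :: "real^'n^'n" where "E = S - S'"
  have diag_E: "\<And>i j. i \<noteq> j \<Longrightarrow> E$i$j = 0" and diag_S': "\<And>i j. i \<noteq> j \<Longrightarrow> S'$i$j = 0"
    using diag by (simp_all add: E_def S'_def)
  have residual: "U ** S ** transpose V - U ** S' ** transpose V = U ** E ** transpose V"
    by (simp add: E_def matrix_diff_ldistrib matrix_diff_rdistrib)
  have "transpose U ** (U ** S' ** transpose V) ** V = (transpose U ** U) ** S' ** (transpose V ** V)"
    by (simp only: matrix_mul_assoc)
  then have "transpose U ** (U ** S' ** transpose V) ** V = S'"
    using assms(2,3) by (simp add: orthogonal_matrix)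
  then have conj: "inner (U ** E ** transpose V) D - inner (U ** E ** transpose V) (U ** S' ** transpose V)
      = (\<Sum>i\<in>UNIV. E$i$i * ((transpose U ** D ** V)$i$i - S'$i$i))" for D :: "real^'n^'n"
    by (simp add: inner_diagonal_conj[OF diag_E] sum_subtractf algebra_simps)
  show "U ** S' ** transpose V \<in> spectral_ball c"
    unfolding spectral_ball_def spec_le_iff
  proof (intro CollectI allI)
    fix x
    have "norm ((U ** S' ** transpose V) *v x) = norm (S' *v (transpose V *v x))"
      using assms(2) by (simp add: matrix_vector_mul_assoc[symmetric] norm_orthogonal_matrix_vector_mult)
    also have "\<dots> \<le> c * norm (transpose V *v x)"
    proof (rule norm_diagonal_matrix_vector_mult_le[OF diag_S'])
      show "\<bar>S'$i$i\<bar> \<le> c" for i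
        using \<open>c \<ge> 0\<close> assms(5) by (simp add: S'_def)
    qed
    also have "\<dots> = c * norm x"
      using assms(3) norm_orthogonal_matrix_vector_mult[of "transpose V" x] by simp
    finally show "norm ((U ** S' ** transpose V) *v x) \<le> c * norm x" .
  qed
  show "\<forall>D\<in>spectral_ball c. inner (U ** S ** transpose V - U ** S' ** transpose V) (D - U ** S' ** transpose V) \<le> 0"
  proof
    fix D :: "real^'n^'n" assume "D \<in> spectral_ball c"
    then have "(transpose U ** D ** V)$i$i \<le> c" for i
      by (rule orthogonal_conj_diagonal_le[OF assms(2,3)])
    then have "E$i$i * ((transpose U ** D ** V)$i$i - S'$i$i) \<le> 0" for i
      by (cases "S$i$i \<le> c") (simp_all add: E_def S'_def mult_nonneg_nonpos)
    then show "inner (U ** S ** transpose V - U ** S' ** transpose V) (D - U ** S' ** transpose V) \<le> 0"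
      unfolding residual inner_diff_right conj by (simp add: sum_nonpos)
  qed
qed

lemma proj_c_eq_closest_point:
  assumes "c \<ge> 0"
  shows "proj_c c X = closest_point (spectral_ball c) X"
proof -
  obtain U S V where svd: "orthogonal_matrix U" "orthogonal_matrix V"
    "\<forall>i j. i \<noteq> j \<longrightarrow> S$i$j = 0" "\<forall>i. S$i$i \<ge> 0" "X = U ** S ** transpose V"
    using svd_exists[of X] by (elim exE conjE) blast
  note closest = closest_point_spectral_ball_svd[OF assms]
  have clip: "closest_point (spectral_ball c) X = U ** (\<chi> i j. if i = j then min (S$i$j) c else 0) ** transpose V"
    unfolding svd(5) by (rule closest[OF svd(1-4)])
  show ?thesis
    unfolding proj_c_def
  proof (rule the_equality)
    show "\<exists>U S V. orthogonal_matrix U \<and> orthogonal_matrix V \<and>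
      (\<forall>i j. i \<noteq> j \<longrightarrow> S$i$j = 0) \<and> (\<forall>i. S$i$i \<ge> 0) \<and> X = U ** S ** transpose V \<and>
      closest_point (spectral_ball c) X = U ** (\<chi> i j. if i = j then min (S$i$j) c else 0) ** transpose V"
      by (intro exI[of _ U] exI[of _ S] exI[of _ V] conjI) (fact svd clip)+
  next
    fix Y assume "\<exists>U S V. orthogonal_matrix U \<and> orthogonal_matrix V \<and>
      (\<forall>i j. i \<noteq> j \<longrightarrow> S$i$j = 0) \<and> (\<forall>i. S$i$i \<ge> 0) \<and> X = U ** S ** transpose V \<and>
      Y = U ** (\<chi> i j. if i = j then min (S$i$j) c else 0) ** transpose V"
    then show "Y = closest_point (spectral_ball c) X"
      by (elim exE conjE) (simp add: closest)
  qed
qed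

section \<open>The Lagrangian dual of the sparse magnitude projection problem\<close>

lemma frob_eq_norm: "frob X = norm X"
  by (simp add: frob_def norm_vec_def L2_set_def real_sqrt_pow2 sum_nonneg)

lemma mdot_eq_inner: "mdot X Y = inner X Y"
  by (simp add: mdot_def inner_vec_def)

lemma tdot_eq_inner_hadamard: "tdot L Z D = inner (hadamard L Z) D"
  by (simp add: tdot_def inner_vec_def hadamard_def)

lemma Lag_complete_square:
  "Lag A Z L M D = (1/2) * (norm (D - (absm A + M - hadamard L Z)))^2
     - (1/2) * (norm (absm A + M - hadamard L Z))^2 + (1/2) * (norm (absm A))^2"
  unfolding Lag_def frob_eq_norm tdot_eq_inner_hadamard mdot_eq_inner power2_norm_eq_inner
  by (simp add: inner_diff_left inner_diff_right inner_add_left inner_add_right inner_commute algebra_simps)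

lemma Dmat_eq_closest_point:
  "c \<ge> 0 \<Longrightarrow> Dmat c A Z L M = closest_point (spectral_ball c) (absm A + M - hadamard L Z)"
  by (simp add: Dmat_def proj_c_eq_closest_point)

lemma Dmat_minimizes_Lag:
  assumes "c \<ge> 0"
  shows "spec (Dmat c A Z L M) \<le> c" "spec D \<le> c \<Longrightarrow> gdual c A Z L M \<le> Lag A Z L M D"
proof -
  let ?Y = "absm A + M - hadamard L Z"
  have "spectral_ball c \<noteq> {}" using zero_in_spectral_ball[OF assms] by blast
  then show "spec (Dmat c A Z L M) \<le> c"
    using closest_point_in_set[OF closed_spectral_ball]
    by (simp add: Dmat_eq_closest_point[OF assms] spectral_ball_def)
  assume "spec D \<le> c"
  then have "dist ?Y (closest_point (spectral_ball c) ?Y) \<le> dist ?Y D"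
    by (intro closest_point_le closed_spectral_ball) (simp add: spectral_ball_def)
  then have "(norm (closest_point (spectral_ball c) ?Y - ?Y))^2 \<le> (norm (D - ?Y))^2"
    by (simp add: dist_norm norm_minus_commute power_mono)
  then show "gdual c A Z L M \<le> Lag A Z L M D"
    unfolding gdual_def Lag_complete_square Dmat_eq_closest_point[OF assms] by simp
qed

lemma Lag_minimizer_unique:
  assumes "c \<ge> 0" "spec D \<le> c" "Lag A Z L M D \<le> gdual c A Z L M"
  shows "D = Dmat c A Z L M"
proof -
  let ?Y = "absm A + M - hadamard L Z"
  have "(norm (D - ?Y))^2 \<le> (norm (closest_point (spectral_ball c) ?Y - ?Y))^2"
    using assms(3) unfolding gdual_def Lag_complete_square Dmat_eq_closest_point[OF assms(1)] by simp
  then have "norm (D - ?Y) \<le> norm (closest_point (spectral_ball c) ?Y - ?Y)"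
    by (rule power2_le_imp_le) simp
  then have "\<forall>z\<in>spectral_ball c. dist ?Y D \<le> dist ?Y z"
    using closest_point_le[OF closed_spectral_ball, where a = ?Y] by (force simp: dist_norm norm_minus_commute)
  then have "D = closest_point (spectral_ball c) ?Y"
    using assms(2) by (intro closest_point_unique convex_spectral_ball closed_spectral_ball)
      (auto simp: spectral_ball_def)
  then show ?thesis by (simp add: Dmat_eq_closest_point[OF assms(1)])
qed

lemma gdual_has_derivative:
  fixes A Z :: "real^'n::finite^'n"
  assumes "c \<ge> 0"
  shows "((\<lambda>(L, N). gdual c A Z L N) has_derivative
           (\<lambda>(dL, dN). mdot (hadamard Z (Dmat c A Z \<Lambda> M)) dL - mdot (Dmat c A Z \<Lambda> M) dN)) (at (\<Lambda>, M))"
proof -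
  define P where "P = closest_point (spectral_ball c :: 'n sqmat set)"
  define env where "env y = (1/2) * (norm (y - P y))^2 - (1/2) * (norm y)^2" for y
  define lin where "lin p = snd p - hadamard (fst p) Z" for p :: "'n sqmat \<times> 'n sqmat"
  define Y where "Y p = absm A + snd p - hadamard (fst p) Z" for p :: "'n sqmat \<times> 'n sqmat"
  have "linear lin"
    by (rule linearI) (simp_all add: lin_def hadamard_def vec_eq_iff algebra_simps)
  moreover have "Y = (\<lambda>p. absm A + lin p)"
    by (simp add: fun_eq_iff Y_def lin_def add_diff_eq)
  moreover have "((\<lambda>p. absm A + lin p) has_derivative (\<lambda>p. 0 + lin p)) (at (\<Lambda>, M))"
    using \<open>linear lin\<close> unfolding linear_conv_bounded_linear
    by (intro has_derivative_add has_derivative_const bounded_linear_imp_has_derivative)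
  ultimately have "(Y has_derivative lin) (at (\<Lambda>, M))"
    by simp
  moreover have "(env has_derivative (\<lambda>d. inner (- P (Y (\<Lambda>, M))) d)) (at (Y (\<Lambda>, M)))"
    unfolding env_def P_def
    using convex_spectral_ball closed_spectral_ball zero_in_spectral_ball[OF assms]
    by (intro closest_point_envelope_has_derivative) auto
  ultimately have "((\<lambda>p. env (Y p) + (1/2) * (norm (absm A))^2)
      has_derivative (\<lambda>p. inner (- P (Y (\<Lambda>, M))) (lin p))) (at (\<Lambda>, M))"
    by (intro has_derivative_add_const) (rule has_derivative_compose)
  moreover have "(\<lambda>(L, N). gdual c A Z L N) = (\<lambda>p. env (Y p) + (1/2) * (norm (absm A))^2)"
    by (auto simp: fun_eq_iff gdual_def Lag_complete_square Dmat_eq_closest_point[OF assms]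
        env_def P_def Y_def norm_minus_commute)
  moreover have "(\<lambda>(dL, dN). mdot (hadamard Z (Dmat c A Z \<Lambda> M)) dL - mdot (Dmat c A Z \<Lambda> M) dN)
      = (\<lambda>p. inner (- P (Y (\<Lambda>, M))) (lin p))"
    by (auto simp: fun_eq_iff Dmat_eq_closest_point[OF assms] P_def Y_def lin_def mdot_eq_inner
        inner_diff_right inner_vec_def hadamard_def algebra_simps sum_subtractf)
  ultimately show ?thesis by simp
qed

definition pattern_cone :: "'n::finite sqmat \<Rightarrow> 'n sqmat set" where
  "pattern_cone Z = {D. \<forall>i j. Z$i$j * D$i$j = 0 \<and> 0 \<le> D$i$j}"

lemma zero_in_pattern_cone: "0 \<in> pattern_cone Z"
  by (simp add: pattern_cone_def)

lemma pattern_cone_eq_INT: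
  "pattern_cone Z = (\<Inter>i. \<Inter>j. {D. inner (Z$i$j *\<^sub>R axis i (axis j 1)) D = 0} \<inter> {D. inner (axis i (axis j 1)) D \<ge> 0})"
  by (auto simp: pattern_cone_def inner_commute[of "axis _ _"] inner_axis)

lemma closed_pattern_cone: "closed (pattern_cone Z)"
  unfolding pattern_cone_eq_INT
  by (intro closed_INT ballI closed_Int closed_hyperplane closed_halfspace_ge)

lemma convex_pattern_cone: "convex (pattern_cone Z)"
  unfolding pattern_cone_eq_INT
  by (intro convex_INT ballI convex_Int convex_hyperplane convex_halfspace_ge)

lemma pattern_cone_normal:
  fixes D n Z :: "real^'n::finite^'n"
  assumes "D \<in> pattern_cone Z" "\<forall>y \<in> pattern_cone Z. inner n (y - D) \<le> 0" "Z$i$j = 0"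
  shows "n$i$j \<le> 0" "n$i$j * D$i$j = 0"
proof -
  define e :: "'n sqmat" where "e = axis i (axis j 1)"
  have ne: "inner n e = n$i$j" by (simp add: e_def inner_axis)
  have "D + e \<in> pattern_cone Z" "D - D$i$j *\<^sub>R e \<in> pattern_cone Z"
    using assms(1,3) by (auto simp: pattern_cone_def e_def axis_def)
  then have "inner n ((D + e) - D) \<le> 0" "inner n ((D - D$i$j *\<^sub>R e) - D) \<le> 0"
    using assms(2) by blast+
  then have "n$i$j \<le> 0" "- (D$i$j * n$i$j) \<le> 0"
    by (simp_all add: ne)
  moreover have "D$i$j \<ge> 0" using assms(1) by (simp add: pattern_cone_def)
  ultimately show "n$i$j \<le> 0" "n$i$j * D$i$j = 0"
    using mult_nonneg_nonpos[of "D$i$j" "n$i$j"] by (simp_all add: mult.commute)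
qed

text \<open>The multipliers are read off from the normal n: \<Lambda> carries it on the pattern (Z = 1) and
  M = -n off the pattern, where n \<le> 0 and complementary slackness hold.\<close>
lemma pattern_cone_multipliers:
  fixes D n Z :: "real^'n::finite^'n"
  assumes Z01: "\<forall>i j. Z$i$j \<in> {0, 1}"
    and "D \<in> pattern_cone Z" "\<forall>y \<in> pattern_cone Z. inner n (y - D) \<le> 0"
  obtains \<Lambda> M where "nonneg_mat M" "M - hadamard \<Lambda> Z = - n" "tdot \<Lambda> Z D = 0" "mdot M D = 0"
proof -
  define \<Lambda> :: "'n sqmat" where "\<Lambda> = (\<chi> i j. n$i$j * Z$i$j)"
  define M :: "'n sqmat" where "M = (\<chi> i j. - n$i$j * (1 - Z$i$j))"
  note free = pattern_cone_normal[OF assms(2,3)]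
  have "0 \<le> M$i$j" for i j
    using Z01[rule_format, of i j] free(1)[of i j] by (auto simp: M_def)
  then have "nonneg_mat M" by (simp add: nonneg_mat_def)
  have "M$i$j - \<Lambda>$i$j * Z$i$j = - n$i$j" for i j
    using Z01[rule_format, of i j] by (auto simp: M_def \<Lambda>_def)
  then have shift: "M - hadamard \<Lambda> Z = - n"
    by (simp add: vec_eq_iff hadamard_def)
  have "\<Lambda>$i$j * Z$i$j * D$i$j = 0" "M$i$j * D$i$j = 0" for i j
    using Z01[rule_format, of i j] free(2)[of i j] assms(2) by (auto simp: \<Lambda>_def M_def pattern_cone_def)
  then have "tdot \<Lambda> Z D = 0" "mdot M D = 0"
    unfolding tdot_def mdot_def by (simp_all only: sum.neutral_const)
  with \<open>nonneg_mat M\<close> shift show ?thesis by (rule that)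
qed

definition copy_signs :: "'n::finite sqmat \<Rightarrow> 'n sqmat \<Rightarrow> 'n sqmat" where
  "copy_signs A D = (\<chi> i j. if A$i$j \<ge> 0 then D$i$j else - D$i$j)"

lemma feasP_imp_mem:
  assumes "feasP c Z B D"
  shows "D \<in> spectral_ball c \<inter> pattern_cone Z"
proof -
  have "0 \<le> D$i$j" for i j
    using assms by (simp add: feasP_def absm_def)
  then show ?thesis
    using assms unfolding feasP_def spectral_ball_def pattern_cone_def by blast
qed

lemma feasP_copy_signs: "D \<in> spectral_ball c \<inter> pattern_cone Z \<Longrightarrow> feasP c Z (copy_signs A D) D"
  by (auto simp: feasP_def spectral_ball_def pattern_cone_def absm_def copy_signs_def vec_eq_iff)

lemma frob_copy_signs: "D \<in> pattern_cone Z \<Longrightarrow> frob (A - copy_signs A D) = norm (D - absm A)"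
proof -
  assume "D \<in> pattern_cone Z"
  then have "(A$i$j - copy_signs A D $i$j)^2 = (D$i$j - \<bar>A$i$j\<bar>)^2" for i j
    by (cases "A$i$j \<ge> 0") (auto simp: pattern_cone_def copy_signs_def power2_eq_square algebra_simps)
  then show ?thesis
    by (simp add: frob_eq_norm[symmetric] frob_def absm_def)
qed

lemma norm_absm_diff_le_frob: "norm (absm B - absm A) \<le> frob (A - B)"
proof -
  have "(\<bar>B$i$j\<bar> - \<bar>A$i$j\<bar>)^2 \<le> (A$i$j - B$i$j)^2" for i j
    by (metis abs_le_square_iff abs_minus_commute abs_triangle_ineq3)
  then have "frob (absm B - absm A) \<le> frob (A - B)"
    unfolding frob_def by (intro real_sqrt_le_mono sum_mono) (simp add: absm_def)
  then show ?thesis by (simp add: frob_eq_norm)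
qed

definition Dopt :: "real \<Rightarrow> 'n::finite sqmat \<Rightarrow> 'n sqmat \<Rightarrow> 'n sqmat" where
  "Dopt c A Z = closest_point (spectral_ball c \<inter> pattern_cone Z) (absm A)"

lemma
  assumes "c \<ge> 0"
  shows Dopt_mem: "Dopt c A Z \<in> spectral_ball c \<inter> pattern_cone Z"
    and Dopt_le: "D \<in> spectral_ball c \<inter> pattern_cone Z \<Longrightarrow> norm (Dopt c A Z - absm A) \<le> norm (D - absm A)"
proof -
  have "closed (spectral_ball c \<inter> pattern_cone Z)" "0 \<in> spectral_ball c \<inter> pattern_cone Z"
    using closed_spectral_ball closed_pattern_cone zero_in_spectral_ball[OF assms] zero_in_pattern_cone
    by auto
  then show "Dopt c A Z \<in> spectral_ball c \<inter> pattern_cone Z"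
    unfolding Dopt_def by (intro closest_point_in_set) auto
  show "norm (Dopt c A Z - absm A) \<le> norm (D - absm A)" if "D \<in> spectral_ball c \<inter> pattern_cone Z"
    using closest_point_le[OF \<open>closed _\<close> that, of "absm A"]
    by (simp add: Dopt_def dist_norm norm_minus_commute)
qed

lemma copy_signs_Dopt_optimal:
  assumes "c \<ge> 0" "feasP c Z B D"
  shows "frob (A - copy_signs A (Dopt c A Z)) \<le> frob (A - B)"
proof -
  have "frob (A - copy_signs A (Dopt c A Z)) = norm (Dopt c A Z - absm A)"
    using Dopt_mem[OF assms(1)] frob_copy_signs[of "Dopt c A Z" Z A] by blast
  also have "\<dots> \<le> norm (D - absm A)"
    using Dopt_le[OF assms(1) feasP_imp_mem[OF assms(2)]] .
  also have "\<dots> \<le> frob (A - B)"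
    using assms(2) norm_absm_diff_le_frob[of B A] by (simp add: feasP_def)
  finally show ?thesis .
qed

lemma Lag_le_objective:
  assumes "nonneg_mat M" "D \<in> pattern_cone Z"
  shows "Lag A Z L M D \<le> (1/2) * (norm (D - absm A))^2"
proof -
  have "Z$i$j * D$i$j = 0" for i j
    using assms(2) by (simp add: pattern_cone_def)
  then have "tdot L Z D = 0"
    unfolding tdot_def by (simp only: mult.assoc mult_zero_right sum.neutral_const)
  moreover have "mdot M D \<ge> 0"
    using assms by (auto simp: mdot_def nonneg_mat_def pattern_cone_def intro!: sum_nonneg)
  ultimately show ?thesis
    by (simp add: Lag_def frob_eq_norm)
qed

lemma strong_duality:
  fixes A Z :: "real^'n::finite^'n"
  assumes "c > 0" and Z01: "\<forall>i j. Z$i$j \<in> {0, 1}"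
  obtains \<Lambda> M where "nonneg_mat M" "Dmat c A Z \<Lambda> M = Dopt c A Z"
    "gdual c A Z \<Lambda> M = (1/2) * (norm (Dopt c A Z - absm A))^2"
proof -
  let ?K = "spectral_ball c :: 'n sqmat set" and ?L = "pattern_cone Z" and ?D = "Dopt c A Z"
  have D: "?D \<in> ?K" "?D \<in> ?L" using Dopt_mem[of c A Z] assms(1) by auto
  have "convex (?K \<inter> ?L)" "closed (?K \<inter> ?L)"
    by (simp_all add: convex_Int convex_spectral_ball convex_pattern_cone closed_Int
        closed_spectral_ball closed_pattern_cone)
  then have "\<forall>y\<in>?K \<inter> ?L. inner (absm A - ?D) (y - ?D) \<le> 0"
    unfolding Dopt_def by (blast intro: closest_point_dot)
  moreover have "c / (real CARD('n) * real CARD('n)) > 0" using assms(1) by simp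
  ultimately obtain n where "\<forall>y\<in>?L. inner n (y - ?D) \<le> 0"
      and n_K: "\<forall>y\<in>?K. inner (absm A - ?D - n) (y - ?D) \<le> 0"
    using normal_cone_Int[OF convex_spectral_ball convex_pattern_cone _ cball_subset_spectral_ball
        zero_in_pattern_cone D] by blast
  then obtain \<Lambda> M where M: "nonneg_mat M" "M - hadamard \<Lambda> Z = - n" and slack: "tdot \<Lambda> Z ?D = 0" "mdot M ?D = 0"
    using pattern_cone_multipliers[OF Z01 D(2)] by blast
  have "closest_point ?K (absm A - n) = ?D"
    using n_K D(1) by (intro closest_point_eqI convex_spectral_ball closed_spectral_ball) (simp_all add: algebra_simps)
  moreover have shift: "absm A + M - hadamard \<Lambda> Z = absm A - n"
    using M(2) by (simp add: algebra_simps)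
  ultimately have Dmat: "Dmat c A Z \<Lambda> M = ?D"
    using assms(1) by (simp only: Dmat_eq_closest_point less_imp_le shift)
  then have "gdual c A Z \<Lambda> M = (1/2) * (norm (?D - absm A))^2"
    using slack by (simp add: gdual_def Lag_def frob_eq_norm)
  with M(1) Dmat show ?thesis by (rule that)
qed

lemma weak_duality:
  assumes "c \<ge> 0" "nonneg_mat M"
  shows "gdual c A Z L M \<le> Lag A Z L M (Dopt c A Z)"
    and "Lag A Z L M (Dopt c A Z) \<le> (1/2) * (norm (Dopt c A Z - absm A))^2"
proof -
  have D: "spec (Dopt c A Z) \<le> c" "Dopt c A Z \<in> pattern_cone Z"
    using Dopt_mem[OF assms(1)] by (auto simp: spectral_ball_def)
  show "gdual c A Z L M \<le> Lag A Z L M (Dopt c A Z)"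
    by (rule Dmat_minimizes_Lag(2)[OF assms(1) D(1)])
  show "Lag A Z L M (Dopt c A Z) \<le> (1/2) * (norm (Dopt c A Z - absm A))^2"
    by (rule Lag_le_objective[OF assms(2) D(2)])
qed

lemma dual_optimum_attained:
  fixes A Z :: "real^'n::finite^'n"
  assumes "c > 0" "\<forall>i j. Z$i$j \<in> {0, 1}"
  shows "\<exists>\<Lambda> M B D. nonneg_mat M \<and>
        (\<forall>\<Lambda>' M'. nonneg_mat M' \<longrightarrow> gdual c A Z \<Lambda>' M' \<le> gdual c A Z \<Lambda> M) \<and>
        feasP c Z B D \<and>
        (\<forall>B' D'. feasP c Z B' D' \<longrightarrow> frob (A - B) \<le> frob (A - B')) \<and>
        (1/2) * (frob (A - B))^2 = gdual c A Z \<Lambda> M"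
proof -
  have "c \<ge> 0" using assms(1) by simp
  let ?D = "Dopt c A Z" and ?B = "copy_signs A (Dopt c A Z)"
  obtain \<Lambda> M where M: "nonneg_mat M" and val: "gdual c A Z \<Lambda> M = (1/2) * (norm (?D - absm A))^2"
    using strong_duality[OF assms] by blast
  have "gdual c A Z \<Lambda>' M' \<le> gdual c A Z \<Lambda> M" if "nonneg_mat M'" for \<Lambda>' M'
    using weak_duality[OF \<open>c \<ge> 0\<close> that, of A Z \<Lambda>'] val by linarith
  moreover have "(1/2) * (frob (A - ?B))^2 = gdual c A Z \<Lambda> M"
    using IntD2[OF Dopt_mem[OF \<open>c \<ge> 0\<close>, of A Z]] frob_copy_signs[of ?D Z A] val by simp
  ultimately show ?thesis
    using M feasP_copy_signs[OF Dopt_mem[OF \<open>c \<ge> 0\<close>]] copy_signs_Dopt_optimal[OF \<open>c \<ge> 0\<close>]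
    by blast
qed

lemma dual_maximizer_recovers_primal:
  fixes A Z :: "real^'n::finite^'n"
  assumes "c > 0" "\<forall>i j. Z$i$j \<in> {0, 1}" "nonneg_mat M"
    and max: "\<forall>\<Lambda>' M'. nonneg_mat M' \<longrightarrow> gdual c A Z \<Lambda>' M' \<le> gdual c A Z \<Lambda> M"
  shows "\<exists>B. feasP c Z B (Dmat c A Z \<Lambda> M) \<and>
           (\<forall>B' D'. feasP c Z B' D' \<longrightarrow> frob (A - B) \<le> frob (A - B'))"
proof -
  have "c \<ge> 0" using assms(1) by simp
  obtain \<Lambda>' M' where "nonneg_mat M'" "gdual c A Z \<Lambda>' M' = (1/2) * (norm (Dopt c A Z - absm A))^2"
    using strong_duality[OF assms(1,2)] by blast
  moreover from this(1) have "gdual c A Z \<Lambda>' M' \<le> gdual c A Z \<Lambda> M"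
    using max by blast
  ultimately have "Lag A Z \<Lambda> M (Dopt c A Z) \<le> gdual c A Z \<Lambda> M"
    using weak_duality(2)[OF \<open>c \<ge> 0\<close> assms(3), of A Z \<Lambda>] by linarith
  moreover have "spec (Dopt c A Z) \<le> c"
    using IntD1[OF Dopt_mem[OF \<open>c \<ge> 0\<close>]] by (simp add: spectral_ball_def)
  ultimately have "Dopt c A Z = Dmat c A Z \<Lambda> M"
    using Lag_minimizer_unique[OF \<open>c \<ge> 0\<close>] by blast
  then show ?thesis
    using feasP_copy_signs[OF Dopt_mem[OF \<open>c \<ge> 0\<close>]] copy_signs_Dopt_optimal[OF \<open>c \<ge> 0\<close>] by metis
qed

theorem theorem7:
  fixes A Z :: "real^'n::finite^'n" and c :: real
  assumes "c > 0" and "\<forall>i j. Z$i$j \<in> {0, 1}"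
  shows
    \<comment> \<open>g is the Lagrangian dual function: D(Lambda,M) attains the min over the spectral ball\<close>
    "(\<forall>\<Lambda> M. nonneg_mat M \<longrightarrow>
        spec (Dmat c A Z \<Lambda> M) \<le> c \<and>
        (\<forall>D. spec D \<le> c \<longrightarrow> gdual c A Z \<Lambda> M \<le> Lag A Z \<Lambda> M D))
   \<and> \<comment> \<open>gradients\<close>
     (\<forall>\<Lambda> M. nonneg_mat M \<longrightarrow>
        ((\<lambda>(L, N). gdual c A Z L N) has_derivative
           (\<lambda>(dL, dN). mdot (hadamard Z (Dmat c A Z \<Lambda> M)) dL - mdot (Dmat c A Z \<Lambda> M) dN))
        (at (\<Lambda>, M)))
   \<and> \<comment> \<open>equivalence: both optima attained, (1/2) p*^2 = max g\<close>
     (\<exists>\<Lambda> M B D. nonneg_mat M \<and>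
        (\<forall>\<Lambda>' M'. nonneg_mat M' \<longrightarrow> gdual c A Z \<Lambda>' M' \<le> gdual c A Z \<Lambda> M) \<and>
        feasP c Z B D \<and>
        (\<forall>B' D'. feasP c Z B' D' \<longrightarrow> frob (A - B) \<le> frob (A - B')) \<and>
        (1/2) * (frob (A - B))^2 = gdual c A Z \<Lambda> M)
   \<and> \<comment> \<open>any dual maximizer yields a primal solution via D(Lambda,M)\<close>
     (\<forall>\<Lambda> M. nonneg_mat M \<and>
        (\<forall>\<Lambda>' M'. nonneg_mat M' \<longrightarrow> gdual c A Z \<Lambda>' M' \<le> gdual c A Z \<Lambda> M) \<longrightarrow>
        (\<exists>B. feasP c Z B (Dmat c A Z \<Lambda> M) \<and>
           (\<forall>B' D'. feasP c Z B' D' \<longrightarrow> frob (A - B) \<le> frob (A - B'))))"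
proof -
  have "c \<ge> 0" using assms(1) by simp
  show ?thesis
  proof (intro conjI allI impI)
    fix \<Lambda> M D
    show "spec (Dmat c A Z \<Lambda> M) \<le> c" "spec D \<le> c \<Longrightarrow> gdual c A Z \<Lambda> M \<le> Lag A Z \<Lambda> M D"
      by (fact Dmat_minimizes_Lag[OF \<open>c \<ge> 0\<close>])+
    show "((\<lambda>(L, N). gdual c A Z L N) has_derivative
           (\<lambda>(dL, dN). mdot (hadamard Z (Dmat c A Z \<Lambda> M)) dL - mdot (Dmat c A Z \<Lambda> M) dN)) (at (\<Lambda>, M))"
      by (rule gdual_has_derivative[OF \<open>c \<ge> 0\<close>])
  next
    fix \<Lambda> M
    assume "nonneg_mat M \<and> (\<forall>\<Lambda>' M'. nonneg_mat M' \<longrightarrow> gdual c A Z \<Lambda>' M' \<le> gdual c A Z \<Lambda> M)"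
    then show "\<exists>B. feasP c Z B (Dmat c A Z \<Lambda> M) \<and> (\<forall>B' D'. feasP c Z B' D' \<longrightarrow> frob (A - B) \<le> frob (A - B'))"
      by (elim conjE) (rule dual_maximizer_recovers_primal[OF assms])
  qed (rule dual_optimum_attained[OF assms])
qed

end
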